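(* Let $\sigma$ be a 2-structure and $X\subsetneq V(\sigma)$ with $\sigma[X]$ prime; write $\overline{X}=V(\sigma)\setminus X$. Suppose Statement (S5) holds (there is no $Y\subseteq\overline{X}$ with $|Y|=5$ and $\sigma[X\cup Y]$ prime). Then for each connected component $C$ of the outside graph $\Gamma_{(\sigma,\overline{X})}$, $P_5\not\leq C$.
   Context: A 2-structure $\sigma$ consists of a vertex set $V(\sigma)$ and an equivalence relation $\equiv_\sigma$ on ordered pairs of distinct vertices; $\sigma[W]$ is the induced 2-structure on $W$. A module is a set $M$ such that for all $x,y\in M$ and $v\notin M$, $(x,v)\equiv_\sigma(y,v)$ and $(v,x)\equiv_\sigma(v,y)$; $\sigma$ is prime if $|V(\sigma)|\geq3$ and its only modules are $\emptyset$, $V(\sigma)$ and singletons. The outside graph $\Gamma_{(\sigma,\overline{X})}$ has vertex set $\overline{X}$ and edges the 2-element sets $Y\subseteq\overline{X}$ with $\sigma[X\cup Y]$ prime. $P_5$ is the path on 5 vertices; $G\leq H$ means $G$ is isomorphic to an induced subgraph of $H$. *)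

theory Defs
  imports Main
begin

definition pairs2 :: "'a set \<Rightarrow> ('a \<times> 'a) set" where
  "pairs2 V = {(x, y). x \<in> V \<and> y \<in> V \<and> x \<noteq> y}"

definition two_structure :: "'a set \<Rightarrow> (('a \<times> 'a) \<times> ('a \<times> 'a)) set \<Rightarrow> bool" where
  "two_structure V R \<longleftrightarrow> equiv (pairs2 V) R"

definition induced2 :: "(('a \<times> 'a) \<times> ('a \<times> 'a)) set \<Rightarrow> 'a set \<Rightarrow> (('a \<times> 'a) \<times> ('a \<times> 'a)) set" where
  "induced2 R W = R \<inter> (pairs2 W \<times> pairs2 W)"

definition is_module :: "'a set \<Rightarrow> (('a \<times> 'a) \<times> ('a \<times> 'a)) set \<Rightarrow> 'a set \<Rightarrow> bool" where
  "is_module V R M \<longleftrightarrow> M \<subseteq> V \<and>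
     (\<forall>x\<in>M. \<forall>y\<in>M. \<forall>v\<in>V - M. ((x, v), (y, v)) \<in> R \<and> ((v, x), (v, y)) \<in> R)"

definition prime2 :: "'a set \<Rightarrow> (('a \<times> 'a) \<times> ('a \<times> 'a)) set \<Rightarrow> bool" where
  "prime2 V R \<longleftrightarrow> (infinite V \<or> card V \<ge> 3) \<and>
     (\<forall>M. is_module V R M \<longrightarrow> M = {} \<or> M = V \<or> (\<exists>x. M = {x}))"

text \<open>Outside graph Gamma_(sigma, V - X): vertices V - X, edges the 2-subsets Y of
V - X with sigma[X \<union> Y] prime. Graphs are given by a vertex set and a set of 2-element edges.\<close>
definition outside_edges :: "'a set \<Rightarrow> (('a \<times> 'a) \<times> ('a \<times> 'a)) set \<Rightarrow> 'a set \<Rightarrow> 'a set set" where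
  "outside_edges V R X = {Y. Y \<subseteq> V - X \<and> card Y = 2 \<and> prime2 (X \<union> Y) (induced2 R (X \<union> Y))}"

definition adj_rel :: "'a set \<Rightarrow> 'a set set \<Rightarrow> ('a \<times> 'a) set" where
  "adj_rel VG EG = {(x, y). x \<in> VG \<and> y \<in> VG \<and> {x, y} \<in> EG}"

text \<open>C is (the vertex set of) a connected component of graph (VG, EG);
the component as a graph is the induced subgraph (C, induced_edges EG C).\<close>
definition is_component :: "'a set \<Rightarrow> 'a set set \<Rightarrow> 'a set \<Rightarrow> bool" where
  "is_component VG EG C \<longleftrightarrow> (\<exists>u\<in>VG. C = {v. (u, v) \<in> (adj_rel VG EG)\<^sup>*})"

definition induced_edges :: "'a set set \<Rightarrow> 'a set \<Rightarrow> 'a set set" where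
  "induced_edges EG C = {e \<in> EG. e \<subseteq> C}"

text \<open>G \<le> H: G is isomorphic to an induced subgraph of H.\<close>
definition induced_sub :: "'a set \<Rightarrow> 'a set set \<Rightarrow> 'b set \<Rightarrow> 'b set set \<Rightarrow> bool" where
  "induced_sub VG EG VH EH \<longleftrightarrow> (\<exists>f. inj_on f VG \<and> f ` VG \<subseteq> VH \<and>
     (\<forall>x\<in>VG. \<forall>y\<in>VG. x \<noteq> y \<longrightarrow> ({x, y} \<in> EG \<longleftrightarrow> {f x, f y} \<in> EH)))"

definition path_V :: "nat \<Rightarrow> nat set" where
  "path_V n = {0..<n}"

definition path_E :: "nat \<Rightarrow> nat set set" where
  "path_E n = {{i, Suc i} | i. Suc i < n}"

end

theory Submission
  imports Defs
begin

(* Let Y be the vertex set of an induced P5 in the outside graph; we show that sigma[X \<union> Y] is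
   prime, contradicting (S5).  A module M of sigma[X \<union> Y] meets the prime structures sigma[X] and
   sigma[X \<union> {y, z}], for every edge yz of the P5, either completely or in at most one vertex.
   Since P5 has no isolated vertex, M = X \<union> Y if X \<subseteq> M, and M is a single vertex of X if it meets
   X in one vertex.  Otherwise M \<subseteq> Y contains no edge, and for z \<notin> M swapping two vertices
   p, q of M relates every pair of X \<union> {p, z} to an equivalent pair of X \<union> {q, z}; so p and q
   have the same neighbours, and as P5 has no twins, M has at most one vertex. *)

lemma is_module_induced2_Int:
  assumes "is_module Z (induced2 R Z) M" and "W \<subseteq> Z"
  shows "is_module W (induced2 R W) (M \<inter> W)"
  using assms unfolding is_module_def induced2_def pairs2_def by blast

lemma prime2_module_Int_cases:
  assumes "prime2 W (induced2 R W)" and "is_module Z (induced2 R Z) M" and "W \<subseteq> Z"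
  shows "W \<subseteq> M \<or> (\<exists>x. M \<inter> W \<subseteq> {x})"
proof -
  have "M \<inter> W = {} \<or> M \<inter> W = W \<or> (\<exists>x. M \<inter> W = {x})"
    using assms(1) is_module_induced2_Int[OF assms(2,3)] by (simp add: prime2_def)
  then show ?thesis by blast
qed

lemma prime2_obtain_two:
  assumes "prime2 X R"
  obtains x y where "x \<in> X" "y \<in> X" "x \<noteq> y"
proof -
  have large: "infinite X \<or> card X \<ge> 3" using assms by (simp add: prime2_def)
  then obtain x where x: "x \<in> X" by fastforce
  have "X \<noteq> {x}" using large by auto
  then obtain y where "y \<in> X" "y \<noteq> x" using x by blast
  then show ?thesis using that x by blast
qed

lemma prime2_bij_betw:
  assumes "sym R" and "trans R" and g: "bij_betw g A B"
    and related: "\<And>x y. x \<in> A \<Longrightarrow> y \<in> A \<Longrightarrow> x \<noteq> y \<Longrightarrow> ((x, y), (g x, g y)) \<in> R"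
    and prime: "prime2 A (induced2 R A)"
  shows "prime2 B (induced2 R B)"
  unfolding prime2_def
proof (intro conjI allI impI)
  show "infinite B \<or> 3 \<le> card B"
    using prime bij_betw_finite[OF g] bij_betw_same_card[OF g] by (simp add: prime2_def)
next
  fix N assume N: "is_module B (induced2 R B) N"
  define N' where "N' = {x \<in> A. g x \<in> N}"
  have "is_module A (induced2 R A) N'"
    unfolding is_module_def
  proof (intro conjI ballI)
    fix x y v assume xyv: "x \<in> N'" "y \<in> N'" "v \<in> A - N'"
    then have "((g x, g v), (g y, g v)) \<in> R" "((g v, g x), (g v, g y)) \<in> R"
      using N g by (auto simp: is_module_def induced2_def N'_def bij_betw_def)
    moreover have "((x, v), (g x, g v)) \<in> R" "((y, v), (g y, g v)) \<in> R"
      "((v, x), (g v, g x)) \<in> R" "((v, y), (g v, g y)) \<in> R"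
      using xyv related by (auto simp: N'_def)
    ultimately have "((x, v), (y, v)) \<in> R" "((v, x), (v, y)) \<in> R"
      using assms(1,2) by (meson symD transD)+
    then show "((x, v), (y, v)) \<in> induced2 R A" "((v, x), (v, y)) \<in> induced2 R A"
      using xyv unfolding induced2_def pairs2_def N'_def by auto
  qed (simp add: N'_def)
  then have "N' = {} \<or> N' = A \<or> (\<exists>x. N' = {x})"
    using prime by (simp add: prime2_def)
  moreover have "N = g ` N'"
    using N g by (auto simp: N'_def is_module_def bij_betw_def)
  ultimately show "N = {} \<or> N = B \<or> (\<exists>x. N = {x})"
    using g by (auto simp: bij_betw_def)
qed

lemma prime2_swap_in_module:
  assumes R: "two_structure V R" and "Z \<subseteq> V"
    and M: "is_module Z (induced2 R Z) M" and "p \<in> M" and "q \<in> M" and W: "W \<subseteq> Z - M"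
    and prime: "prime2 (insert p W) (induced2 R (insert p W))"
  shows "prime2 (insert q W) (induced2 R (insert q W))"
proof (rule prime2_bij_betw[OF _ _ _ _ prime])
  have equiv: "equiv (pairs2 V) R" using R by (simp add: two_structure_def)
  then show "sym R" "trans R" by (simp_all add: equiv_def)
  have "p \<notin> W" "q \<notin> W" using W \<open>p \<in> M\<close> \<open>q \<in> M\<close> by auto
  then show "bij_betw (id(p := q)) (insert p W) (insert q W)"
    by (auto simp: bij_betw_def inj_on_def)
  fix x y assume xy: "x \<in> insert p W" "y \<in> insert p W" "x \<noteq> y"
  have "((p, w), (q, w)) \<in> R" "((w, p), (w, q)) \<in> R" if "w \<in> W" for w
    using M W that \<open>p \<in> M\<close> \<open>q \<in> M\<close> unfolding is_module_def induced2_def by blast+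
  moreover have "((x, y), (x, y)) \<in> R" if "x \<in> W" "y \<in> W"
    using equiv that xy W \<open>Z \<subseteq> V\<close> unfolding equiv_def refl_on_def pairs2_def by blast
  ultimately show "((x, y), (id(p := q)) x, (id(p := q)) y) \<in> R"
    using xy by auto
qed

lemma outside_edges_doubleton_iff:
  "{y, z} \<in> outside_edges V R X \<longleftrightarrow>
     y \<in> V - X \<and> z \<in> V - X \<and> y \<noteq> z \<and> prime2 (X \<union> {y, z}) (induced2 R (X \<union> {y, z}))"
  by (auto simp: outside_edges_def)

lemma outside_edges_swap_in_module:
  assumes R: "two_structure V R" and "Z \<subseteq> V" and M: "is_module Z (induced2 R Z) M"
    and "X \<subseteq> Z - M" and "p \<in> M" and "q \<in> M" and "z \<in> Z - M"
    and edge: "{p, z} \<in> outside_edges V R X"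
  shows "{q, z} \<in> outside_edges V R X"
proof -
  have "prime2 (insert p (insert z X)) (induced2 R (insert p (insert z X)))"
    using edge by (simp add: outside_edges_doubleton_iff)
  moreover have "insert z X \<subseteq> Z - M" using assms(4,7) by blast
  ultimately have "prime2 (insert q (insert z X)) (induced2 R (insert q (insert z X)))"
    using prime2_swap_in_module[OF R \<open>Z \<subseteq> V\<close> M \<open>p \<in> M\<close> \<open>q \<in> M\<close>] by blast
  moreover have "q \<in> V - X" "q \<noteq> z" "z \<in> V - X"
    using assms by (auto simp: is_module_def outside_edges_doubleton_iff)
  ultimately show ?thesis by (simp add: outside_edges_doubleton_iff)
qed

lemma module_Int_outside_edge_cases:
  assumes M: "is_module (X \<union> Y) (induced2 R (X \<union> Y)) M"
    and edge: "{y, z} \<in> outside_edges V R X" and "y \<in> Y" and "z \<in> Y"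
  shows "X \<union> {y, z} \<subseteq> M \<or> (\<exists>x. M \<inter> (X \<union> {y, z}) \<subseteq> {x})"
proof -
  have "prime2 (X \<union> {y, z}) (induced2 R (X \<union> {y, z}))" "X \<union> {y, z} \<subseteq> X \<union> Y"
    using assms by (auto simp: outside_edges_doubleton_iff)
  then show ?thesis by (rule prime2_module_Int_cases[OF _ M])
qed

lemma module_meeting_prime2_part:
  assumes X: "prime2 X (induced2 R X)" and Y: "Y \<subseteq> V - X"
    and no_isolated: "\<And>y. y \<in> Y \<Longrightarrow> \<exists>z\<in>Y. {y, z} \<in> outside_edges V R X"
    and M: "is_module (X \<union> Y) (induced2 R (X \<union> Y)) M" and "M \<inter> X \<noteq> {}"
  shows "M = X \<union> Y \<or> (\<exists>x. M = {x})"
proof -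
  obtain x1 x2 where x12: "x1 \<in> X" "x2 \<in> X" "x1 \<noteq> x2" using X by (rule prime2_obtain_two)
  have MZ: "M \<subseteq> X \<union> Y" using M by (simp add: is_module_def)
  have "M \<inter> X = X \<or> (\<exists>x. M \<inter> X = {x})"
    using X is_module_induced2_Int[OF M Un_upper1] \<open>M \<inter> X \<noteq> {}\<close> unfolding prime2_def by blast
  then consider (covers) "X \<subseteq> M" | (single) x where "M \<inter> X = {x}" by blast
  then show ?thesis
  proof cases
    case covers
    have "y \<in> M" if "y \<in> Y" for y
    proof -
      obtain z where "z \<in> Y" "{y, z} \<in> outside_edges V R X" using no_isolated \<open>y \<in> Y\<close> by blast
      moreover have "x1 \<in> M \<inter> (X \<union> {y, z})" "x2 \<in> M \<inter> (X \<union> {y, z})" using covers x12 by auto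
      ultimately show ?thesis
        using module_Int_outside_edge_cases[OF M] \<open>y \<in> Y\<close> x12(3) by blast
    qed
    then show ?thesis using covers MZ by blast
  next
    case (single x)
    have "\<not> X \<subseteq> M" using single x12 by (metis IntI singletonD subsetD)
    have "y \<notin> M" if "y \<in> Y" for y
    proof
      assume "y \<in> M"
      obtain z where "z \<in> Y" "{y, z} \<in> outside_edges V R X" using no_isolated \<open>y \<in> Y\<close> by blast
      moreover have "x \<in> M \<inter> (X \<union> {y, z})" "y \<in> M \<inter> (X \<union> {y, z})" "x \<noteq> y"
        using single \<open>y \<in> M\<close> \<open>y \<in> Y\<close> Y by auto
      ultimately show False
        using module_Int_outside_edge_cases[OF M] \<open>y \<in> Y\<close> \<open>\<not> X \<subseteq> M\<close> by blast
    qed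
    then show ?thesis using single MZ by blast
  qed
qed

lemma module_disjoint_from_prime2_part_swap:
  assumes R: "two_structure V R" and "X \<subseteq> V" and X: "prime2 X (induced2 R X)" and Y: "Y \<subseteq> V - X"
    and M: "is_module (X \<union> Y) (induced2 R (X \<union> Y)) M" and "M \<inter> X = {}"
    and "p \<in> M" and "q \<in> M" and "z \<in> Y" and edge: "{p, z} \<in> outside_edges V R X"
  shows "{q, z} \<in> outside_edges V R X"
proof -
  obtain x1 x2 where x12: "x1 \<in> X" "x2 \<in> X" "x1 \<noteq> x2" using X by (rule prime2_obtain_two)
  have MZ: "M \<subseteq> X \<union> Y" using M by (simp add: is_module_def)
  have "z \<notin> M"
  proof
    assume "z \<in> M"
    moreover have "p \<noteq> z" "p \<in> Y" using edge \<open>p \<in> M\<close> \<open>M \<inter> X = {}\<close> MZ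
      by (auto simp: outside_edges_doubleton_iff)
    moreover have "\<not> X \<subseteq> M" using \<open>M \<inter> X = {}\<close> x12 by auto
    ultimately show False
      using module_Int_outside_edge_cases[OF M edge] \<open>p \<in> M\<close> \<open>z \<in> Y\<close> by blast
  qed
  then show ?thesis
    using outside_edges_swap_in_module[OF R _ M _ \<open>p \<in> M\<close> \<open>q \<in> M\<close> _ edge]
      \<open>X \<subseteq> V\<close> Y \<open>M \<inter> X = {}\<close> \<open>z \<in> Y\<close> by blast
qed

lemma prime2_Un_twin_free:
  assumes R: "two_structure V R" and "X \<subseteq> V" and X: "prime2 X (induced2 R X)" and Y: "Y \<subseteq> V - X"
    and no_isolated: "\<And>y. y \<in> Y \<Longrightarrow> \<exists>z\<in>Y. {y, z} \<in> outside_edges V R X"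
    and twin_free: "\<And>y y'. y \<in> Y \<Longrightarrow> y' \<in> Y \<Longrightarrow>
      \<forall>z\<in>Y. {y, z} \<in> outside_edges V R X \<longleftrightarrow> {y', z} \<in> outside_edges V R X \<Longrightarrow> y = y'"
  shows "prime2 (X \<union> Y) (induced2 R (X \<union> Y))"
  unfolding prime2_def
proof (intro conjI allI impI)
  show "infinite (X \<union> Y) \<or> 3 \<le> card (X \<union> Y)"
    using X card_mono[of "X \<union> Y" X] by (auto simp: prime2_def)
  fix M assume M: "is_module (X \<union> Y) (induced2 R (X \<union> Y)) M"
  show "M = {} \<or> M = X \<union> Y \<or> (\<exists>x. M = {x})"
  proof (cases "M \<inter> X = {}")
    case True
    have "M \<subseteq> Y" using M True by (auto simp: is_module_def)
    moreover have "p = q" if "p \<in> M" "q \<in> M" for p q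
      using twin_free[of p q] module_disjoint_from_prime2_part_swap[OF R \<open>X \<subseteq> V\<close> X Y M True]
        that \<open>M \<subseteq> Y\<close> by blast
    ultimately show ?thesis by blast
  next
    case False
    then show ?thesis using module_meeting_prime2_part[OF X Y no_isolated M] by blast
  qed
qed

lemma path_E_doubleton_iff:
  "{i, j} \<in> path_E n \<longleftrightarrow> (j = Suc i \<or> i = Suc j) \<and> i < n \<and> j < n"
  by (auto simp: path_E_def doubleton_eq_iff)

lemma path_E_no_isolated:
  assumes "2 \<le> n" and "i < n"
  shows "\<exists>j<n. {i, j} \<in> path_E n"
  using assms by (intro exI[of _ "if i = 0 then 1 else i - 1"]) (auto simp: path_E_doubleton_iff)

lemma path_E_twin_free:
  assumes "n \<noteq> 3" and "i < n" and "j < n"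
    and same: "\<forall>k<n. {i, k} \<in> path_E n \<longleftrightarrow> {j, k} \<in> path_E n"
  shows "i = j"
proof -
  have False if "a < b" "b < n" "\<forall>k<n. {a, k} \<in> path_E n \<longleftrightarrow> {b, k} \<in> path_E n" for a b
  proof -
    have "b = Suc (Suc a)"
      using that(1,2) that(3)[rule_format, of "Suc a"] by (auto simp: path_E_doubleton_iff)
    moreover have "a = 0"
      using that that(3)[rule_format, of "a - 1"] \<open>b = Suc (Suc a)\<close>
      by (cases a) (auto simp: path_E_doubleton_iff)
    ultimately show False
      using that(2) that(3)[rule_format, of 3] \<open>n \<noteq> 3\<close> by (auto simp: path_E_doubleton_iff)
  qed
  then show ?thesis
    using assms by (metis linorder_neqE_nat)
qed

lemma induced_sub_induced_edges_iff:
  "induced_sub VG EG C (induced_edges EH C) \<longleftrightarrow> induced_sub VG EG C EH"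
  unfolding induced_sub_def induced_edges_def by (intro ex_cong1) (auto simp: image_subset_iff)

lemma outside_graph_no_induced_P5:
  assumes R: "two_structure V R" and "X \<subseteq> V" and X: "prime2 X (induced2 R X)"
    and no_prime_5: "\<not> (\<exists>Y. Y \<subseteq> V - X \<and> card Y = 5 \<and> prime2 (X \<union> Y) (induced2 R (X \<union> Y)))"
  shows "\<not> induced_sub (path_V 5) (path_E 5) C (outside_edges V R X)"
proof
  assume "induced_sub (path_V 5) (path_E 5) C (outside_edges V R X)"
  then obtain f where inj: "inj_on f {0..<5}"
    and edges: "\<forall>i\<in>{0..<5}. \<forall>k\<in>{0..<5}. i \<noteq> k \<longrightarrow>
      ({i, k} \<in> path_E 5 \<longleftrightarrow> {f i, f k} \<in> outside_edges V R X)"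
    unfolding induced_sub_def path_V_def by blast
  have edge_iff: "{f i, f k} \<in> outside_edges V R X \<longleftrightarrow> {i, k} \<in> path_E 5"
    if "i < 5" "k < 5" for i k
  proof (cases "i = k")
    case True
    then show ?thesis by (auto simp: outside_edges_def path_E_def)
  next
    case False
    then show ?thesis using edges that by auto
  qed
  define Y where "Y = f ` {0..<5}"
  have Y_neighbour: "\<exists>z\<in>Y. {y, z} \<in> outside_edges V R X" if "y \<in> Y" for y
  proof -
    obtain i where "i < 5" "y = f i" using \<open>y \<in> Y\<close> by (auto simp: Y_def)
    moreover obtain k where "k < 5" "{i, k} \<in> path_E 5" using path_E_no_isolated[OF _ \<open>i < 5\<close>] by auto
    ultimately show ?thesis using edge_iff by (auto simp: Y_def)
  qed
  have Y: "Y \<subseteq> V - X"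
    using Y_neighbour by (auto simp: outside_edges_doubleton_iff)
  have "prime2 (X \<union> Y) (induced2 R (X \<union> Y))"
  proof (rule prime2_Un_twin_free[OF R \<open>X \<subseteq> V\<close> X Y Y_neighbour])
    fix y y' assume "y \<in> Y" "y' \<in> Y"
      and same: "\<forall>z\<in>Y. {y, z} \<in> outside_edges V R X \<longleftrightarrow> {y', z} \<in> outside_edges V R X"
    then obtain i j where ij: "i < 5" "j < 5" "y = f i" "y' = f j" by (auto simp: Y_def)
    have "\<forall>k<5. {i, k} \<in> path_E 5 \<longleftrightarrow> {j, k} \<in> path_E 5"
      using same ij edge_iff by (auto simp: Y_def)
    then show "y = y'" using path_E_twin_free[of 5 i j] ij by simp
  qed
  moreover have "card Y = 5" using card_image[OF inj] by (simp add: Y_def)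
  ultimately show False using no_prime_5 Y by blast
qed

theorem lemma4p4:
  fixes V X C :: "'a set" and R :: "(('a \<times> 'a) \<times> ('a \<times> 'a)) set"
  assumes "two_structure V R"
    and "X \<subset> V"
    and "prime2 X (induced2 R X)"
    and "\<not> (\<exists>Y. Y \<subseteq> V - X \<and> card Y = 5 \<and> prime2 (X \<union> Y) (induced2 R (X \<union> Y)))"
    and "is_component (V - X) (outside_edges V R X) C"
  shows "\<not> induced_sub (path_V 5) (path_E 5) C (induced_edges (outside_edges V R X) C)"
  using outside_graph_no_induced_P5[OF assms(1) _ assms(3,4)] assms(2)
  by (simp add: induced_sub_induced_edges_iff psubset_imp_subset)

end
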